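(* Let $w$ be an infinite word on $\mathcal{A}$ with infinitely many palindromic prefixes; let $(n_i)_{i\ge1}$ be the increasing sequence of their lengths ($n_1=0$) and $\pi_i$ the palindromic prefix of $w$ of length $n_i$. Let $i_0$ be an integer. The following are equivalent: (i) $n_{i+1}\le 2n_i+1$ for all $i\ge i_0$; (ii) there exists a reduced function $\psi$ such that for every $i\ge i_0$, either $\psi(i)\in\mathcal{A}$ and $\pi_{i+1}=\pi_i\,\psi(i)\,\pi_i$, or $\psi(i)\in\mathbb{N}^*$ and $\pi_{i+1}=\pi_i b$, where $b$ is the word with $\pi_i=\pi_{\psi(i)}b$ (i.e. $\pi_{i+1}=\pi_i\pi_{\psi(i)}^{-1}\pi_i$).
   Context: $\mathcal{A}$ is an alphabet (finite or infinite) disjoint from $\mathbb{N}^*=\{1,2,\dots\}$; the empty word is a palindrome. A function here is a map $\psi:\mathbb{N}^*\to\mathbb{N}^*\sqcup\mathcal{A}$ such that for every $n\ge1$ either $\psi(n)\in\mathcal{A}$ or $1\le\psi(n)\le n-1$. Let $(t_k)_{k\ge0}$ be the (finite or infinite) family, in increasing order, of all $n\ge1$ with $\psi(n)\in\mathcal{A}$ or $1\le\psi(n)\le n-2$. $\psi$ is reduced if for every $k\ge1$ such that $t_k$ exists: $\psi(t_k)\ne\psi(t_{k-1})$, and either $\psi(t_k)\in\mathcal{A}$ or $\psi(t_k)<t_{k-1}$. *)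

theory Defs
  imports Main "HOL-Library.Infinite_Set"
begin

text \<open>Infinite words over the alphabet 'a are maps nat => 'a (positions 0,1,2,...).
  The disjoint union N* + A is modelled by the sum type: Inl a is the letter a,
  Inr k is the positive integer k.\<close>

definition prefix_word :: "(nat \<Rightarrow> 'a) \<Rightarrow> nat \<Rightarrow> 'a list" where
  "prefix_word w n = map w [0..<n]"

definition is_palindrome :: "'a list \<Rightarrow> bool" where
  "is_palindrome u \<longleftrightarrow> rev u = u"

definition pal_lengths :: "(nat \<Rightarrow> 'a) \<Rightarrow> nat set" where
  "pal_lengths w = {n. is_palindrome (prefix_word w n)}"

definition pal_n :: "(nat \<Rightarrow> 'a) \<Rightarrow> nat \<Rightarrow> nat" where
  "pal_n w i = enumerate (pal_lengths w) (i - 1)"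

definition pal_pi :: "(nat \<Rightarrow> 'a) \<Rightarrow> nat \<Rightarrow> 'a list" where
  "pal_pi w i = prefix_word w (pal_n w i)"

definition is_psi_function :: "(nat \<Rightarrow> 'a + nat) \<Rightarrow> bool" where
  "is_psi_function \<psi> \<longleftrightarrow>
     (\<forall>n\<ge>1. case \<psi> n of Inl _ \<Rightarrow> True | Inr k \<Rightarrow> 1 \<le> k \<and> k \<le> n - 1)"

definition t_set :: "(nat \<Rightarrow> 'a + nat) \<Rightarrow> nat set" where
  "t_set \<psi> = {n. n \<ge> 1 \<and> (case \<psi> n of Inl _ \<Rightarrow> True | Inr k \<Rightarrow> 1 \<le> k \<and> k + 2 \<le> n)}"

definition reduced :: "(nat \<Rightarrow> 'a + nat) \<Rightarrow> bool" where
  "reduced \<psi> \<longleftrightarrow> is_psi_function \<psi> \<and>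
     (\<forall>m n. m \<in> t_set \<psi> \<longrightarrow> n \<in> t_set \<psi> \<longrightarrow> m < n \<longrightarrow>
        (\<forall>j. m < j \<and> j < n \<longrightarrow> j \<notin> t_set \<psi>) \<longrightarrow>
        \<psi> n \<noteq> \<psi> m \<and> (case \<psi> n of Inl _ \<Rightarrow> True | Inr k \<Rightarrow> k < m))"

end

theory Submission
  imports Defs
begin

(*
  Write d_i = n_{i+1} - n_i (pal_gap). As \<pi>_i is a palindromic suffix of the palindrome
  \<pi>_{i+1}, d_i is a period of \<pi>_{i+1}, and it is the least one: a smaller period would yield
  a palindromic prefix strictly between \<pi>_i and \<pi>_{i+1}. If n_{i+1} \<le> 2 n_i + 1, then either
  \<pi>_{i+1} = \<pi>_i a \<pi>_i, or d_i \<le> n_i and the border of \<pi>_i of length n_i - d_i is a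
  palindromic prefix \<pi>_k with \<pi>_{i+1} = \<pi>_i \<pi>_k^-1 \<pi>_i; this canonical choice is pal_step.

  Beyond the last index G violating (i), pal_step is reduced. Between two consecutive t's the
  value at j is j - 1, i.e. the gaps stay equal to some D. If the value at the next t repeated
  the previous one or pointed back into this run, d_i would be a proper multiple of D; since D
  is a period of a prefix of length at least d_i, it would then be a period of \<pi>_{i+1},
  contradicting minimality. Up to G alternating letters are used; two letters exist because
  a constant word violates (i) nowhere. The converse implication is a length count.
*)

definition prefix_has_period :: "(nat \<Rightarrow> 'a) \<Rightarrow> nat \<Rightarrow> nat \<Rightarrow> bool" where
  "prefix_has_period w L q \<longleftrightarrow> (\<forall>x. x + q < L \<longrightarrow> w x = w (x + q))"

lemma mem_pal_lengths_iff: "L \<in> pal_lengths w \<longleftrightarrow> (\<forall>x<L. w x = w (L - 1 - x))"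
proof -
  have "rev (prefix_word w L) = prefix_word w L \<longleftrightarrow> (\<forall>x<L. w (L - 1 - x) = w x)"
    by (simp add: prefix_word_def list_eq_iff_nth_eq rev_nth)
  also have "\<dots> \<longleftrightarrow> (\<forall>x<L. w x = w (L - 1 - x))"
    by (simp only: eq_commute)
  finally show ?thesis
    by (simp add: pal_lengths_def is_palindrome_def)
qed

lemma prefix_has_period_mono: "prefix_has_period w L q \<Longrightarrow> M \<le> L \<Longrightarrow> prefix_has_period w M q"
  unfolding prefix_has_period_def by auto

lemma pal_lengths_diff_period:
  assumes "L \<in> pal_lengths w" "prefix_has_period w L q" "q \<le> L"
  shows "L - q \<in> pal_lengths w"
  unfolding mem_pal_lengths_iff
proof (intro allI impI)
  fix x assume x: "x < L - q"
  have "L - q - 1 - x < L"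
    using x by linarith
  then have "w (L - q - 1 - x) = w (L - 1 - (L - q - 1 - x))"
    using assms(1) unfolding mem_pal_lengths_iff by blast
  also have "L - 1 - (L - q - 1 - x) = x + q"
    using x by linarith
  also have "w (x + q) = w x"
    using assms(2) x by (simp add: prefix_has_period_def less_diff_conv)
  finally show "w x = w (L - q - 1 - x)" by simp
qed

lemma prefix_has_period_pal_lengths:
  assumes "L \<in> pal_lengths w" "M \<in> pal_lengths w" "M \<le> L"
  shows "prefix_has_period w L (L - M)"
  unfolding prefix_has_period_def
proof (intro allI impI)
  fix x assume x: "x + (L - M) < L"
  then have "x < M"
    using assms(3) by linarith
  then have "w x = w (M - 1 - x)"
    using assms(2) unfolding mem_pal_lengths_iff by blast
  also have "M - 1 - x = L - 1 - (x + (L - M))"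
    using x assms(3) by linarith
  also have "w (L - 1 - (x + (L - M))) = w (x + (L - M))"
    using assms(1) x unfolding mem_pal_lengths_iff by metis
  finally show "w x = w (x + (L - M))" .
qed

lemma prefix_has_period_mod:
  assumes "prefix_has_period w L q" "0 < q" "x < L"
  shows "w x = w (x mod q)"
  using assms(3)
proof (induction x rule: less_induct)
  case (less x)
  show ?case
  proof (cases "x < q")
    case False
    then have "w (x - q) = w x"
      using assms(1) less.prems unfolding prefix_has_period_def
      by (metis le_add_diff_inverse2 not_less)
    moreover have "w (x - q) = w ((x - q) mod q)"
      using less.IH less.prems False assms(2) by simp
    ultimately show ?thesis
      using False by (simp add: le_mod_geq)
  qed simp
qed

lemma prefix_has_period_divisor:
  assumes "prefix_has_period w L q" "prefix_has_period w M d" "d dvd q" "q \<le> M" "0 < d" "0 < q"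
  shows "prefix_has_period w L d"
  unfolding prefix_has_period_def
proof (intro allI impI)
  have reduce: "w x = w (x mod d)" if "x < L" for x
  proof -
    have "x mod q < M"
      using assms(4,6) mod_less_divisor[of q x] by linarith
    then have "w (x mod q) = w (x mod q mod d)"
      using prefix_has_period_mod[OF assms(2,5)] by blast
    then show ?thesis
      using prefix_has_period_mod[OF assms(1,6) that] assms(3) by (simp add: mod_mod_cancel)
  qed
  fix x assume "x + d < L"
  then show "w x = w (x + d)"
    using reduce[of x] reduce[of "x + d"] by simp
qed

lemma prefix_has_period_Suc:
  assumes "prefix_has_period w L d" "0 < d" "w L = w (L mod d)"
  shows "prefix_has_period w (Suc L) d"
  unfolding prefix_has_period_def
proof (intro allI impI)
  fix x assume x: "x + d < Suc L"
  show "w x = w (x + d)"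
  proof (cases "x + d < L")
    case True
    then show ?thesis
      using assms(1) unfolding prefix_has_period_def by blast
  next
    case False
    then have L: "L = x + d" and "x < L"
      using x assms(2) by linarith+
    then have "w x = w (x mod d)"
      using prefix_has_period_mod[OF assms(1,2)] by blast
    then show ?thesis
      using assms(3) L by simp
  qed
qed

lemma map_upt_shift_period:
  assumes "prefix_has_period w L p" "y + p \<le> L"
  shows "map w [x + p..<y + p] = map w [x..<y]"
proof (rule nth_equalityI)
  fix k assume "k < length (map w [x + p..<y + p])"
  then have k: "k < y - x" by simp
  then have "x + k + p < L" using assms(2) by linarith
  then have "w (x + k) = w (x + k + p)"
    using assms(1) unfolding prefix_has_period_def by blast
  moreover have "map w [x + p..<y + p] ! k = w (x + k + p)"
    using k by (simp add: add.commute add.left_commute)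
  ultimately show "map w [x + p..<y + p] ! k = map w [x..<y] ! k"
    using k by simp
qed simp

lemma prefix_word_add: "prefix_word w (m + k) = prefix_word w m @ map w [m..<m + k]"
  by (simp add: prefix_word_def upt_add_eq_append[of 0 m k])

lemma eq_first_if_eq_pred:
  fixes f :: "nat \<Rightarrow> 'b"
  assumes "\<forall>j\<in>{m<..<i}. f j = f (j - 1)"
  shows "\<forall>j\<in>{m..<i}. f j = f m"
proof
  fix j assume "j \<in> {m..<i}"
  then have "m \<le> j" "j < i"
    by simp_all
  then show "f j = f m"
  proof (induction j rule: dec_induct)
    case (step j)
    then show ?case using assms by simp
  qed simp
qed

lemma obtain_least_threshold:
  fixes P :: "nat \<Rightarrow> bool" and i0 :: int
  assumes "\<forall>i\<ge>1. int i \<ge> i0 \<longrightarrow> P i"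
  obtains G where "\<forall>j>G. P j" "\<forall>i\<ge>1. int i \<ge> i0 \<longrightarrow> G < i" "G = 0 \<or> \<not> P G"
proof -
  let ?good_after = "\<lambda>G. \<forall>j>G. P j"
  define G where "G = (LEAST G. ?good_after G)"
  have bound: "?good_after (nat i0 - 1)"
  proof (intro allI impI)
    fix j assume "nat i0 - 1 < j"
    then have "1 \<le> j" "int j \<ge> i0"
      by arith+
    then show "P j"
      using assms by blast
  qed
  then have after: "?good_after G"
    unfolding G_def by (rule LeastI[of ?good_after])
  have "G \<le> nat i0 - 1"
    unfolding G_def using bound by (rule Least_le[of ?good_after])
  then have before: "\<forall>i\<ge>1. int i \<ge> i0 \<longrightarrow> G < i"
    by (intro allI impI) arith
  have "\<not> P G" if "G \<noteq> 0"
  proof -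
    have "\<not> ?good_after (G - 1)"
      unfolding G_def by (rule not_less_Least) (use that in \<open>simp add: G_def\<close>)
    then obtain j where j: "G - 1 < j" "\<not> P j"
      by blast
    have "j \<le> G"
    proof (rule ccontr)
      assume "\<not> j \<le> G"
      then show False
        using after j(2) by simp
    qed
    then have "j = G"
      using j(1) that by linarith
    then show "\<not> P G"
      using j(2) by simp
  qed
  then have "G = 0 \<or> \<not> P G"
    by blast
  with after before show ?thesis
    by (rule that)
qed

lemma reduced_alternating_prefix:
  fixes \<phi> :: "nat \<Rightarrow> 'a + nat"
  assumes psi: "\<forall>j>G. case \<phi> j of Inl _ \<Rightarrow> True | Inr k \<Rightarrow> 1 \<le> k \<and> k \<le> j - 1"
    and tail: "\<And>m i. G \<le> m \<Longrightarrow> 1 \<le> m \<Longrightarrow> m < i \<Longrightarrow> i \<in> t_set \<phi> \<Longrightarrow>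
      \<forall>j\<in>{m<..<i}. j \<notin> t_set \<phi> \<Longrightarrow>
      (case \<phi> i of Inl _ \<Rightarrow> True | Inr k \<Rightarrow> k < m) \<and> (G < m \<longrightarrow> \<phi> i \<noteq> \<phi> m)"
    and letters: "0 < G \<Longrightarrow> c' \<noteq> c \<and> \<phi> (LEAST j. G < j \<and> j \<in> t_set \<phi>) \<noteq> Inl c"
  shows "reduced (\<lambda>j. if j \<le> G then Inl (if even (G - j) then c else c') else \<phi> j)"
    (is "reduced ?\<psi>")
proof -
  have t_set_\<psi>: "j \<in> t_set ?\<psi> \<longleftrightarrow> 1 \<le> j \<and> j \<le> G \<or> G < j \<and> j \<in> t_set \<phi>" for j
    by (auto simp: t_set_def)
  have "is_psi_function ?\<psi>"
    using psi by (auto simp: is_psi_function_def)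
  moreover have "?\<psi> i \<noteq> ?\<psi> m \<and> (case ?\<psi> i of Inl _ \<Rightarrow> True | Inr k \<Rightarrow> k < m)"
    if m: "m \<in> t_set ?\<psi>" and i: "i \<in> t_set ?\<psi>" "m < i"
      and between: "\<forall>j. m < j \<and> j < i \<longrightarrow> j \<notin> t_set ?\<psi>" for m i
  proof -
    have m1: "1 \<le> m"
      using m by (simp add: t_set_def)
    consider "i \<le> G" | "m < G" "G < i" | "G \<le> m" "G < i"
      by linarith
    then show ?thesis
    proof cases
      case 1
      have "i = m + 1"
        using between[rule_format, of "m + 1"] t_set_\<psi>[of "m + 1"] 1 i(2) m1 by linarith
      then have "G - m = Suc (G - i)"
        using 1 by simp
      then show ?thesis
        using 1 i(2) letters by auto
    next
      case 2
      then show ?thesis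
        using between[rule_format, of G] t_set_\<psi>[of G] m1 by simp
    next
      case 3
      have i_T: "i \<in> t_set \<phi>" and between_T: "\<forall>j\<in>{m<..<i}. j \<notin> t_set \<phi>"
        using i between t_set_\<psi> 3 by auto
      note tail_m_i = tail[OF 3(1) m1 i(2) i_T between_T]
      have "\<phi> i \<noteq> ?\<psi> m"
      proof (cases "G < m")
        case True
        then show ?thesis
          using tail_m_i by simp
      next
        case False
        then have "m = G"
          using 3 by simp
        have "(LEAST j. G < j \<and> j \<in> t_set \<phi>) = i"
        proof (rule Least_equality)
          show "G < i \<and> i \<in> t_set \<phi>"
            using 3 i_T by simp
          show "i \<le> j" if "G < j \<and> j \<in> t_set \<phi>" for j
            using that between_T \<open>m = G\<close> by (meson greaterThanLessThan_iff not_le)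
        qed
        then show ?thesis
          using letters \<open>m = G\<close> m1 by simp
      qed
      then show ?thesis
        using tail_m_i 3 by simp
    qed
  qed
  ultimately show ?thesis
    unfolding reduced_def by blast
qed

definition pal_gap :: "(nat \<Rightarrow> 'a) \<Rightarrow> nat \<Rightarrow> nat" where
  "pal_gap w i = pal_n w (i + 1) - pal_n w i"

(* If n_{i+1} > 2 n_i + 1 the subtraction truncates and the Inr value is junk: pal_step is
   only used where n_{i+1} \<le> 2 n_i + 1. *)
definition pal_step :: "(nat \<Rightarrow> 'a) \<Rightarrow> nat \<Rightarrow> 'a + nat" where
  "pal_step w i =
     (if pal_n w (i + 1) = 2 * pal_n w i + 1 then Inl (w (pal_n w i))
      else Inr (THE k. 1 \<le> k \<and> pal_n w k = pal_n w i - pal_gap w i))"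

lemma pal_step_InlD:
  "pal_step w i = Inl a \<Longrightarrow> pal_n w (i + 1) = 2 * pal_n w i + 1 \<and> a = w (pal_n w i)"
  by (auto simp: pal_step_def split: if_splits)

locale pal_word =
  fixes w :: "nat \<Rightarrow> 'a"
  assumes infinite_pal_lengths: "infinite (pal_lengths w)"
begin

lemma pal_n_in_pal_lengths: "pal_n w i \<in> pal_lengths w"
  unfolding pal_n_def by (rule enumerate_in_set[OF infinite_pal_lengths])

lemma pal_n_strict_mono: "1 \<le> i \<Longrightarrow> i < j \<Longrightarrow> pal_n w i < pal_n w j"
  using enumerate_mono[OF _ infinite_pal_lengths, of "i - 1" "j - 1"] by (simp add: pal_n_def)

lemma pal_n_mono: "i \<le> j \<Longrightarrow> pal_n w i \<le> pal_n w j"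
  using enumerate_mono_le_iff[OF infinite_pal_lengths, of "i - 1" "j - 1"] by (simp add: pal_n_def)

lemma pal_n_inj: "1 \<le> i \<Longrightarrow> 1 \<le> j \<Longrightarrow> pal_n w i = pal_n w j \<Longrightarrow> i = j"
  using pal_n_strict_mono by (metis less_irrefl nat_neq_iff)

lemma pal_n_surj:
  assumes "L \<in> pal_lengths w"
  obtains k where "1 \<le> k" "pal_n w k = L"
proof -
  obtain m where "enumerate (pal_lengths w) m = L"
    using enumerate_Ex[OF infinite_pal_lengths assms] by blast
  then show ?thesis
    using that[of "Suc m"] by (simp add: pal_n_def)
qed

lemma pal_lengths_le_pal_n:
  assumes "L \<in> pal_lengths w" "L < pal_n w (i + 1)"
  shows "L \<le> pal_n w i"
proof -
  obtain k where "pal_n w k = L"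
    using pal_n_surj[OF assms(1)] by blast
  then show ?thesis
    using pal_n_mono[of k i] pal_n_mono[of "i + 1" k] assms(2) by (cases "k \<le> i") auto
qed

lemma pal_n_Suc: "pal_n w (i + 1) = pal_n w i + pal_gap w i"
  using pal_n_mono[of i "i + 1"] by (simp add: pal_gap_def)

lemma pal_gap_pos: "1 \<le> i \<Longrightarrow> 0 < pal_gap w i"
  using pal_n_strict_mono[of i "i + 1"] by (simp add: pal_gap_def)

lemma prefix_has_period_pal_gap: "prefix_has_period w (pal_n w (i + 1)) (pal_gap w i)"
  unfolding pal_gap_def
  by (rule prefix_has_period_pal_lengths[OF pal_n_in_pal_lengths pal_n_in_pal_lengths pal_n_mono]) simp

lemma prefix_has_period_pal_gap_prev:
  "1 \<le> i \<Longrightarrow> prefix_has_period w (pal_n w i) (pal_gap w (i - 1))"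
  using prefix_has_period_pal_gap[of "i - 1"] by simp

lemma pal_gap_le_period:
  assumes "prefix_has_period w (pal_n w (i + 1)) q" "0 < q" "q \<le> pal_n w (i + 1)"
  shows "pal_gap w i \<le> q"
proof -
  have "pal_n w (i + 1) - q \<in> pal_lengths w"
    using pal_lengths_diff_period[OF pal_n_in_pal_lengths assms(1,3)] .
  moreover have "pal_n w (i + 1) - q < pal_n w (i + 1)"
    using assms(2,3) by linarith
  ultimately have "pal_n w (i + 1) - q \<le> pal_n w i"
    by (rule pal_lengths_le_pal_n)
  then show ?thesis
    unfolding pal_gap_def by linarith
qed

lemma pal_gap_eq_if_period_dvd:
  assumes "1 \<le> i" "prefix_has_period w M d" "0 < d" "d dvd pal_gap w i" "pal_gap w i \<le> M"
  shows "pal_gap w i = d"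
proof -
  have d_le: "d \<le> pal_gap w i"
    using dvd_imp_le[OF assms(4) pal_gap_pos[OF assms(1)]] .
  have "prefix_has_period w (pal_n w (i + 1)) d"
    using prefix_has_period_divisor[OF prefix_has_period_pal_gap assms(2,4,5,3) pal_gap_pos[OF assms(1)]] .
  moreover have "d \<le> pal_n w (i + 1)"
    using d_le by (simp add: pal_gap_def)
  ultimately have "pal_gap w i \<le> d"
    using pal_gap_le_period assms(3) by blast
  then show ?thesis
    using d_le by simp
qed

lemma pal_step_InrD:
  assumes "1 \<le> i" "pal_n w (i + 1) \<le> 2 * pal_n w i + 1" "pal_step w i = Inr k"
  shows "1 \<le> k \<and> k < i \<and> pal_n w i = pal_n w k + pal_gap w i"
proof -
  have gap_le: "pal_gap w i \<le> pal_n w i"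
    using assms(2,3) unfolding pal_step_def pal_gap_def by (auto split: if_splits)
  have "prefix_has_period w (pal_n w i) (pal_gap w i)"
    using prefix_has_period_mono[OF prefix_has_period_pal_gap pal_n_mono] by simp
  then have "pal_n w i - pal_gap w i \<in> pal_lengths w"
    using pal_lengths_diff_period[OF pal_n_in_pal_lengths _ gap_le] by blast
  then obtain k' where k': "1 \<le> k'" "pal_n w k' = pal_n w i - pal_gap w i"
    using pal_n_surj by blast
  have "(THE k. 1 \<le> k \<and> pal_n w k = pal_n w i - pal_gap w i) = k'"
  proof (rule the_equality)
    fix k assume "1 \<le> k \<and> pal_n w k = pal_n w i - pal_gap w i"
    then show "k = k'"
      using pal_n_inj[of k k'] k' by simp
  qed (use k' in simp)
  then have "k = k'"
    using assms(3) by (simp add: pal_step_def split: if_splits)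
  moreover have "pal_n w k' < pal_n w i"
    using k'(2) pal_gap_pos[OF assms(1)] gap_le by linarith
  then have "k' < i"
    using pal_n_mono[of i k'] by linarith
  ultimately show ?thesis
    using k' gap_le by simp
qed

lemma pal_gap_eq_if_not_t_set:
  assumes "1 \<le> i" "pal_n w (i + 1) \<le> 2 * pal_n w i + 1" "i \<notin> t_set (pal_step w)"
  shows "pal_gap w i = pal_gap w (i - 1)"
proof (cases "pal_step w i")
  case (Inl a)
  then show ?thesis
    using assms(1,3) by (simp add: t_set_def)
next
  case (Inr k)
  then have k: "1 \<le> k" "k < i" "pal_n w i = pal_n w k + pal_gap w i"
    using pal_step_InrD[OF assms(1,2)] by auto
  moreover have "\<not> k + 2 \<le> i"
    using assms(1,3) Inr k(1) by (simp add: t_set_def)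
  ultimately have "k = i - 1"
    by linarith
  then have "pal_n w i = pal_n w (i - 1) + pal_gap w i"
    using k(3) by simp
  moreover have "pal_n w i = pal_n w (i - 1) + pal_gap w (i - 1)"
    using pal_n_Suc[of "i - 1"] assms(1) by simp
  ultimately show ?thesis
    by simp
qed

lemma pal_pi_pal_step:
  assumes "1 \<le> i" "pal_n w (i + 1) \<le> 2 * pal_n w i + 1"
  shows "case pal_step w i of
           Inl a \<Rightarrow> pal_pi w (i + 1) = pal_pi w i @ [a] @ pal_pi w i
         | Inr k \<Rightarrow> (\<exists>b. pal_pi w i = pal_pi w k @ b \<and> pal_pi w (i + 1) = pal_pi w i @ b)"
proof -
  define p where "p = pal_gap w i"
  have period: "prefix_has_period w (pal_n w i + p) p"
    unfolding p_def pal_n_Suc[symmetric] by (rule prefix_has_period_pal_gap)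
  have pi_Suc: "pal_pi w (i + 1) = pal_pi w i @ map w [pal_n w i..<pal_n w i + p]"
    unfolding pal_pi_def p_def pal_n_Suc by (rule prefix_word_add)
  show ?thesis
  proof (cases "pal_step w i")
    case (Inl a)
    then have p: "p = pal_n w i + 1" and a: "a = w (pal_n w i)"
      using pal_step_InlD[OF Inl] pal_n_Suc[of i] by (simp_all add: p_def)
    have "map w [pal_n w i..<pal_n w i + p] = a # map w [0 + p..<pal_n w i + p]"
      using p a by (simp add: upt_conv_Cons[of "pal_n w i"] del: upt_Suc)
    also have "map w [0 + p..<pal_n w i + p] = pal_pi w i"
      using map_upt_shift_period[OF period, where x = 0 and y = "pal_n w i"]
      by (simp add: pal_pi_def prefix_word_def)
    finally show ?thesis
      using Inl pi_Suc by simp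
  next
    case (Inr k)
    then have n_i: "pal_n w i = pal_n w k + p"
      using pal_step_InrD[OF assms] by (simp add: p_def)
    define b where "b = map w [pal_n w k..<pal_n w k + p]"
    have "pal_pi w i = pal_pi w k @ b"
      by (simp add: pal_pi_def b_def n_i prefix_word_add)
    moreover have "map w [pal_n w i..<pal_n w i + p] = b"
      using map_upt_shift_period[OF period, where x = "pal_n w k" and y = "pal_n w k + p"]
      by (simp add: b_def n_i)
    ultimately show ?thesis
      using Inr pi_Suc by auto
  qed
qed

lemma pal_n_on_const_gap:
  assumes "\<forall>j\<in>{m..<i}. pal_gap w j = D" "m \<le> j" "j \<le> i"
  shows "pal_n w j = pal_n w m + (j - m) * D"
  using assms(2,3)
proof (induction j rule: dec_induct)
  case (step j)
  then have "pal_n w (Suc j) = pal_n w j + D"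
    using assms(1) pal_n_Suc[of j] by simp
  then show ?case
    using step by (simp add: Suc_diff_le)
qed simp

lemma pal_step_Inr_before_run:
  assumes "1 \<le> m" "m < i" and run: "\<forall>j\<in>{m..<i}. pal_gap w j = D"
    and "pal_n w (i + 1) \<le> 2 * pal_n w i + 1" "pal_step w i = Inr k" "k + 2 \<le> i"
  shows "k < m"
proof (rule ccontr)
  assume "\<not> k < m"
  have i: "1 \<le> i"
    using assms(1,2) by simp
  have k: "k < i" "pal_n w i = pal_n w k + pal_gap w i"
    using pal_step_InrD[OF i assms(4,5)] by auto
  have D: "D = pal_gap w m" "D = pal_gap w (i - 1)"
    using run assms(1,2) by auto
  have "pal_n w k = pal_n w m + (k - m) * D" "pal_n w i = pal_n w m + (i - m) * D"
    using pal_n_on_const_gap[OF run, where j = k] pal_n_on_const_gap[OF run, where j = i] \<open>\<not> k < m\<close> k(1)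
    by simp_all
  moreover have "(i - m) * D = (k - m) * D + (i - k) * D"
    using \<open>\<not> k < m\<close> k(1) add_mult_distrib[of "k - m" "i - k" D] by simp
  ultimately have gap_i: "pal_gap w i = (i - k) * D"
    using k(2) by linarith
  have "pal_gap w i = D"
    using pal_gap_eq_if_period_dvd[OF i prefix_has_period_pal_gap_prev[OF i]] pal_gap_pos[OF assms(1)]
      gap_i k(2) D by simp
  then show False
    using gap_i pal_gap_pos[OF assms(1)] assms(6) D by simp
qed

lemma pal_step_Inr_distinct_across_run:
  assumes "1 \<le> m" "m < i" and run: "\<forall>j\<in>{m..<i}. pal_gap w j = D"
    and "pal_n w (m + 1) \<le> 2 * pal_n w m + 1" "pal_n w (i + 1) \<le> 2 * pal_n w i + 1"
    and "pal_step w m = Inr k"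
  shows "pal_step w i \<noteq> Inr k"
proof
  assume step_i: "pal_step w i = Inr k"
  have i: "1 \<le> i"
    using assms(1,2) by simp
  have D: "D = pal_gap w m" "D = pal_gap w (i - 1)"
    using run assms(1,2) by auto
  have "pal_n w m = pal_n w k + D" and n_i: "pal_n w i = pal_n w k + pal_gap w i"
    using pal_step_InrD[OF assms(1,4,6)] pal_step_InrD[OF i assms(5) step_i] D by simp_all
  moreover have "pal_n w i = pal_n w m + (i - m) * D"
    using pal_n_on_const_gap[OF run, where j = i] assms(2) by simp
  ultimately have gap_i: "pal_gap w i = Suc (i - m) * D"
    by simp
  have "pal_gap w i = D"
    using pal_gap_eq_if_period_dvd[OF i prefix_has_period_pal_gap_prev[OF i]] pal_gap_pos[OF assms(1)]
      gap_i n_i D by simp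
  then show False
    using gap_i pal_gap_pos[OF assms(1)] assms(2) D by simp
qed

lemma pal_step_Inl_distinct_across_run:
  assumes "1 \<le> m" "m < i" and run: "\<forall>j\<in>{m..<i}. pal_gap w j = D"
    and "pal_step w m = Inl a"
  shows "pal_step w i \<noteq> Inl a"
proof
  assume step_i: "pal_step w i = Inl a"
  have i: "1 \<le> i"
    using assms(1,2) by simp
  have D_prev: "D = pal_gap w (i - 1)"
    using run assms(1,2) by auto
  have "D = pal_gap w m"
    using run assms(2) by auto
  then have D: "D = pal_n w m + 1" and a_m: "a = w (pal_n w m)"
    using pal_step_InlD[OF assms(4)] pal_n_Suc[of m] by simp_all
  have gap_i: "pal_gap w i = pal_n w i + 1" and a_i: "a = w (pal_n w i)"
    using pal_step_InlD[OF step_i] pal_n_Suc[of i] by simp_all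
  have n_i: "pal_n w i = pal_n w m + (i - m) * D"
    using pal_n_on_const_gap[OF run, where j = i] assms(2) by simp
  have period: "prefix_has_period w (pal_n w i) D"
    using prefix_has_period_pal_gap_prev[OF i] D_prev by simp
  have "pal_n w i mod D = pal_n w m mod D"
    using n_i by simp
  also have "\<dots> = pal_n w m"
    using D by simp
  \<comment> \<open>so the letter after \<open>\<pi>\<^sub>i\<close> continues the period \<open>D\<close> of \<open>\<pi>\<^sub>i\<close>\<close>
  finally have "w (pal_n w i) = w (pal_n w i mod D)"
    using a_m a_i by simp
  then have period_Suc: "prefix_has_period w (Suc (pal_n w i)) D"
    using prefix_has_period_Suc[OF period] D by simp
  have gap_i': "pal_gap w i = Suc (i - m) * D"
    using gap_i n_i D by simp
  have "pal_gap w i = D"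
  proof (rule pal_gap_eq_if_period_dvd[OF i period_Suc])
    show "0 < D"
      using D by simp
    show "D dvd pal_gap w i"
      using gap_i' by simp
    show "pal_gap w i \<le> Suc (pal_n w i)"
      using gap_i by simp
  qed
  then show False
    using gap_i' D assms(2) by simp
qed

lemma pal_step_reduced_on_consecutive:
  assumes good: "\<forall>j>G. pal_n w (j + 1) \<le> 2 * pal_n w j + 1"
    and "G \<le> m" "1 \<le> m" "m < i" "i \<in> t_set (pal_step w)"
    and between: "\<forall>j\<in>{m<..<i}. j \<notin> t_set (pal_step w)"
  shows "(case pal_step w i of Inl _ \<Rightarrow> True | Inr k \<Rightarrow> k < m) \<and>
    (G < m \<longrightarrow> pal_step w i \<noteq> pal_step w m)"
proof (intro conjI impI)
  have "pal_gap w j = pal_gap w (j - 1)" if "j \<in> {m<..<i}" for j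
  proof (rule pal_gap_eq_if_not_t_set)
    show "1 \<le> j" "pal_n w (j + 1) \<le> 2 * pal_n w j + 1" "j \<notin> t_set (pal_step w)"
      using that good between assms(2,3) by auto
  qed
  then have run: "\<forall>j\<in>{m..<i}. pal_gap w j = pal_gap w m"
    by (intro eq_first_if_eq_pred ballI)
  have good_i: "pal_n w (i + 1) \<le> 2 * pal_n w i + 1"
    using good assms(2,4) by simp
  show "case pal_step w i of Inl _ \<Rightarrow> True | Inr k \<Rightarrow> k < m"
  proof (cases "pal_step w i")
    case (Inr k)
    then have "k + 2 \<le> i"
      using assms(5) by (simp add: t_set_def)
    then show ?thesis
      using pal_step_Inr_before_run[OF assms(3,4) run good_i Inr] Inr by simp
  qed simp
  assume "G < m"
  show "pal_step w i \<noteq> pal_step w m"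
  proof (cases "pal_step w m")
    case (Inl a)
    then show ?thesis
      using pal_step_Inl_distinct_across_run[OF assms(3,4) run] by simp
  next
    case (Inr k)
    have "pal_n w (m + 1) \<le> 2 * pal_n w m + 1"
      using good \<open>G < m\<close> by simp
    then show ?thesis
      using pal_step_Inr_distinct_across_run[OF assms(3,4) run _ good_i Inr] Inr by simp
  qed
qed

lemma exists_other_letter:
  fixes a :: 'a
  assumes "2 * pal_n w i + 1 < pal_n w (i + 1)"
  obtains c where "c \<noteq> a"
proof -
  have "\<exists>x. w x \<noteq> a"
  proof (rule ccontr)
    assume "\<nexists>x. w x \<noteq> a"
    then have "pal_n w i + 1 \<in> pal_lengths w"
      by (simp add: mem_pal_lengths_iff)
    then have "pal_n w i + 1 \<le> pal_n w i"
      using pal_lengths_le_pal_n assms by simp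
    then show False
      by simp
  qed
  then show ?thesis
    using that by blast
qed

lemma exists_reduced_extension_of_pal_step:
  assumes good: "\<forall>j>G. pal_n w (j + 1) \<le> 2 * pal_n w j + 1"
    and last_bad: "G = 0 \<or> 2 * pal_n w G + 1 < pal_n w (G + 1)"
  shows "\<exists>\<psi>. reduced \<psi> \<and> (\<forall>j>G. \<psi> j = pal_step w j)"
proof -
  let ?first = "LEAST j. G < j \<and> j \<in> t_set (pal_step w)"
  obtain c c' :: 'a where letters: "0 < G \<Longrightarrow> c' \<noteq> c \<and> pal_step w ?first \<noteq> Inl c"
  proof (cases "G = 0")
    case False
    then have bad: "2 * pal_n w G + 1 < pal_n w (G + 1)"
      using last_bad by simp
    obtain c where c: "pal_step w ?first \<noteq> Inl c"
    proof (cases "pal_step w ?first")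
      case (Inl a)
      obtain c where "c \<noteq> a"
        using exists_other_letter[OF bad] by blast
      then show ?thesis
        using that[of c] Inl by auto
    qed (use that in simp)
    obtain c' where "c' \<noteq> c"
      using exists_other_letter[OF bad] by blast
    then show ?thesis
      using that c by blast
  qed (use that in simp)
  have "case pal_step w j of Inl _ \<Rightarrow> True | Inr k \<Rightarrow> 1 \<le> k \<and> k \<le> j - 1" if "G < j" for j
  proof (cases "pal_step w j")
    case (Inr k)
    then have "1 \<le> k \<and> k < j"
      using pal_step_InrD[of j k] good that by simp
    then show ?thesis
      using Inr by auto
  qed simp
  then have "reduced (\<lambda>j. if j \<le> G then Inl (if even (G - j) then c else c') else pal_step w j)"
    by (intro reduced_alternating_prefix pal_step_reduced_on_consecutive[OF good] letters) simp_all
  then show ?thesis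
    by auto
qed

end

lemma pal_n_Suc_le_of_step:
  assumes "case s of
             Inl a \<Rightarrow> pal_pi w (i + 1) = pal_pi w i @ [a] @ pal_pi w i
           | Inr k \<Rightarrow> (\<exists>b. pal_pi w i = pal_pi w k @ b \<and> pal_pi w (i + 1) = pal_pi w i @ b)"
  shows "pal_n w (i + 1) \<le> 2 * pal_n w i + 1"
proof -
  have len: "length (pal_pi w j) = pal_n w j" for j
    by (simp add: pal_pi_def prefix_word_def)
  show ?thesis
  proof (cases s)
    case (Inl a)
    then have "length (pal_pi w (i + 1)) = length (pal_pi w i @ [a] @ pal_pi w i)"
      using assms by simp
    then show ?thesis
      by (simp add: len)
  next
    case (Inr k)
    then obtain b where "pal_pi w i = pal_pi w k @ b" "pal_pi w (i + 1) = pal_pi w i @ b"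
      using assms by auto
    then have "pal_n w i = pal_n w k + length b" "pal_n w (i + 1) = pal_n w i + length b"
      by (metis len length_append)+
    then show ?thesis
      by linarith
  qed
qed

theorem proposition6p1:
  fixes w :: "nat \<Rightarrow> 'a" and i0 :: int
  assumes "infinite (pal_lengths w)"
  shows "(\<forall>i\<ge>1. int i \<ge> i0 \<longrightarrow> pal_n w (i + 1) \<le> 2 * pal_n w i + 1) \<longleftrightarrow>
    (\<exists>\<psi> :: nat \<Rightarrow> 'a + nat. reduced \<psi> \<and>
       (\<forall>i\<ge>1. int i \<ge> i0 \<longrightarrow>
          (case \<psi> i of
             Inl a \<Rightarrow> pal_pi w (i + 1) = pal_pi w i @ [a] @ pal_pi w i
           | Inr k \<Rightarrow> (\<exists>b. pal_pi w i = pal_pi w k @ b \<and> pal_pi w (i + 1) = pal_pi w i @ b))))"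
    (is "?bounded \<longleftrightarrow> (\<exists>\<psi>. reduced \<psi> \<and> (\<forall>i\<ge>1. int i \<ge> i0 \<longrightarrow> ?step (\<psi> i) i))")
proof
  assume ?bounded
  then obtain G where good: "\<forall>j>G. pal_n w (j + 1) \<le> 2 * pal_n w j + 1"
    and before: "\<forall>i\<ge>1. int i \<ge> i0 \<longrightarrow> G < i"
    and last_bad: "G = 0 \<or> 2 * pal_n w G + 1 < pal_n w (G + 1)"
    by (rule obtain_least_threshold) (auto simp: not_le)
  interpret pal_word w
    using assms by unfold_locales
  obtain \<psi> where "reduced \<psi>" "\<forall>j>G. \<psi> j = pal_step w j"
    using exists_reduced_extension_of_pal_step[OF good last_bad] by blast
  moreover have "?step (pal_step w i) i" if "1 \<le> i" "int i \<ge> i0" for i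
    using pal_pi_pal_step[OF \<open>1 \<le> i\<close>] good before that by simp
  ultimately show "\<exists>\<psi>. reduced \<psi> \<and> (\<forall>i\<ge>1. int i \<ge> i0 \<longrightarrow> ?step (\<psi> i) i)"
    using before by auto
next
  assume "\<exists>\<psi>. reduced \<psi> \<and> (\<forall>i\<ge>1. int i \<ge> i0 \<longrightarrow> ?step (\<psi> i) i)"
  then show ?bounded
    using pal_n_Suc_le_of_step by blast
qed

end
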